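(* Let $\mathcal{X}\subseteq\mathbb{R}^d$, $k,T\in\mathbb{N}$, $\beta_{\mathrm{count}},\beta_{\mathrm{sum}}>0$ and fixed initial cluster centers. The weighted DP-Lloyd algorithm (defined below) admits the weighted distinguishability profile $$\epsilon_{\mathrm{Lloyd}}(w,\mathbf{x})=\Big(\frac1{\beta_{\mathrm{count}}}+\frac{\|\mathbf{x}\|_1}{\beta_{\mathrm{sum}}}\Big)Tw.$$
   Context: Weighted DP-Lloyd: input a weighted data set $\mathcal{S}=\{(w_i,\mathbf{x}_i)\}_{i=1}^n$ ($w_i\ge1$, $\mathbf{x}_i\in\mathcal{X}$), initial centers $\mathbf{c}_1,\dots,\mathbf{c}_k$, iterations $T$, noise scales $\beta_{\mathrm{sum}},\beta_{\mathrm{count}}$. For $t=1,\dots,T$: compute clusters $\mathcal{C}_j=\{(w_i,\mathbf{x}_i)\mid j=\arg\min_{j'}\|\mathbf{x}_i-\mathbf{c}_{j'}\|_2^2\}$; for each $j$ sample $\xi_j\sim\mathrm{Lap}(0,\beta_{\mathrm{count}})$ and $\zeta_j\in\mathbb{R}^d$ with iid $\mathrm{Lap}(0,\beta_{\mathrm{sum}})$ entries, all independent, and update $\mathbf{c}_j=\big(\xi_j+\sum_{(w,\mathbf{x})\in\mathcal{C}_j}w\big)^{-1}\big(\zeta_j+\sum_{(w,\mathbf{x})\in\mathcal{C}_j}w\mathbf{x}\big)$. Output the final centers. Distributions $P,Q$ are $\epsilon$-indistinguishable if $P(Y)\le e^\epsilon Q(Y)$ and $Q(Y)\le e^\epsilon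 P(Y)$ for all measurable $Y$. A function $\epsilon\colon[1,\infty)\times\mathcal{X}\to\mathbb{R}_{\ge0}$ is a weighted distinguishability profile of a mechanism $\mathcal{M}$ if for every weighted data set $\mathcal{S}$ and every $(w',\mathbf{x}')$, $\mathcal{M}(\mathcal{S})$ and $\mathcal{M}(\mathcal{S}\cup\{(w',\mathbf{x}')\})$ are $\epsilon(w',\mathbf{x}')$-indistinguishable. *)

theory Defs
  imports "HOL-Probability.Probability"
begin

text \<open>Weighted data sets are finite multisets of pairs (weight, point) with points in real^'d.
Cluster centers are functions nat => real^'d, of which the indices 0..<k are relevant.\<close>

type_synonym 'd wdata = "(real \<times> (real^'d)) multiset"

definition l1norm :: "real^'d \<Rightarrow> real" where
  "l1norm x = (\<Sum>i\<in>UNIV. \<bar>x $ i\<bar>)"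

definition lap_pdf :: "real \<Rightarrow> real \<Rightarrow> real" where
  "lap_pdf b t = exp (- \<bar>t\<bar> / b) / (2 * b)"

definition lap :: "real \<Rightarrow> real measure" where
  "lap b = density lborel (\<lambda>t. ennreal (lap_pdf b t))"

definition lap_vec :: "real \<Rightarrow> (real^'d) measure" where
  "lap_vec b = distr (PiM UNIV (\<lambda>_::'d. lap b)) borel (\<lambda>f. \<chi> i. f i)"

definition iter_noise :: "nat \<Rightarrow> real \<Rightarrow> real \<Rightarrow> (nat \<Rightarrow> real \<times> (real^'d)) measure" where
  "iter_noise k b_count b_sum = PiM {..<k} (\<lambda>_. lap b_count \<Otimes>\<^sub>M lap_vec b_sum)"

definition assign :: "nat \<Rightarrow> (nat \<Rightarrow> real^'d) \<Rightarrow> real^'d \<Rightarrow> nat" where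
  "assign k c x = (LEAST j. j < k \<and> (\<forall>j'<k. (norm (x - c j))\<^sup>2 \<le> (norm (x - c j'))\<^sup>2))"

definition cluster_weight :: "nat \<Rightarrow> 'd wdata \<Rightarrow> (nat \<Rightarrow> real^'d) \<Rightarrow> nat \<Rightarrow> real" where
  "cluster_weight k S c j = sum_mset (image_mset (\<lambda>(w, x). if assign k c x = j then w else 0) S)"

definition cluster_sum :: "nat \<Rightarrow> 'd wdata \<Rightarrow> (nat \<Rightarrow> real^'d) \<Rightarrow> nat \<Rightarrow> real^'d" where
  "cluster_sum k S c j = sum_mset (image_mset (\<lambda>(w, x). if assign k c x = j then w *\<^sub>R x else 0) S)"

definition lloyd_step :: "nat \<Rightarrow> 'd wdata \<Rightarrow> (nat \<Rightarrow> real^'d) \<Rightarrow> (nat \<Rightarrow> real \<times> (real^'d))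
    \<Rightarrow> (nat \<Rightarrow> real^'d)" where
  "lloyd_step k S c nz = (\<lambda>j. if j < k then
       inverse (fst (nz j) + cluster_weight k S c j) *\<^sub>R (snd (nz j) + cluster_sum k S c j)
     else undefined)"

fun lloyd_run :: "nat \<Rightarrow> 'd wdata \<Rightarrow> (nat \<Rightarrow> real^'d) \<Rightarrow> nat
    \<Rightarrow> (nat \<Rightarrow> nat \<Rightarrow> real \<times> (real^'d)) \<Rightarrow> (nat \<Rightarrow> real^'d)" where
  "lloyd_run k S c0 0 ns = c0"
| "lloyd_run k S c0 (Suc t) ns = lloyd_step k S (lloyd_run k S c0 t ns) (ns t)"

definition dp_lloyd :: "nat \<Rightarrow> nat \<Rightarrow> real \<Rightarrow> real \<Rightarrow> (nat \<Rightarrow> real^'d) \<Rightarrow> 'd wdata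
    \<Rightarrow> (nat \<Rightarrow> real^'d) measure" where
  "dp_lloyd k T b_count b_sum c0 S =
     distr (PiM {..<T} (\<lambda>_. iter_noise k b_count b_sum)) (PiM {..<k} (\<lambda>_. borel))
       (\<lambda>ns. restrict (lloyd_run k S c0 T ns) {..<k})"

definition indist :: "real \<Rightarrow> 'a measure \<Rightarrow> 'a measure \<Rightarrow> bool" where
  "indist eps P Q \<longleftrightarrow>
     (\<forall>Y \<in> sets P. measure P Y \<le> exp eps * measure Q Y \<and> measure Q Y \<le> exp eps * measure P Y)"

definition weighted_profile ::
    "(real^'d) set \<Rightarrow> (real \<Rightarrow> real^'d \<Rightarrow> real) \<Rightarrow> ('d wdata \<Rightarrow> 'b measure) \<Rightarrow> bool" where
  "weighted_profile X eps M \<longleftrightarrow>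
     (\<forall>w x. w \<ge> 1 \<longrightarrow> x \<in> X \<longrightarrow> eps w x \<ge> 0) \<and>
     (\<forall>S. (\<forall>p \<in># S. fst p \<ge> 1 \<and> snd p \<in> X) \<longrightarrow>
        (\<forall>w' x'. w' \<ge> 1 \<longrightarrow> x' \<in> X \<longrightarrow>
           indist (eps w' x') (M S) (M (add_mset (w', x') S))))"

end

theory Submission
  imports Defs
begin

text \<open>
  Adding a point (w, x) changes, in every iteration, the weight of exactly one cluster by w and its
  weighted sum by w x. Shifting the Laplace noise of that cluster by the same amounts makes the run on
  the smaller data set reproduce the run on the larger one, and shifting Lap(0, b) by a changes its
  density by at most the factor exp(|a| / b), coordinatewise for the vector noise. The cluster that is
  shifted in iteration t depends only on the noise of the earlier iterations, so these factors multiply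
  over the T iterations (adaptive composition), in either direction.
\<close>

section \<open>Maps whose image measure is bounded by a multiple of the measure\<close>

definition image_bounded :: "'a measure \<Rightarrow> ('a \<Rightarrow> 'a) \<Rightarrow> ennreal \<Rightarrow> bool" where
  "image_bounded M g c \<longleftrightarrow> g \<in> measurable M M \<and>
     (\<forall>h \<in> borel_measurable M. (\<integral>\<^sup>+x. h (g x) \<partial>M) \<le> c * (\<integral>\<^sup>+x. h x \<partial>M))"

lemma image_boundedI:
  assumes "g \<in> measurable M M"
    and "\<And>h. h \<in> borel_measurable M \<Longrightarrow> (\<integral>\<^sup>+x. h (g x) \<partial>M) \<le> c * (\<integral>\<^sup>+x. h x \<partial>M)"
  shows "image_bounded M g c"
  using assms by (simp add: image_bounded_def)

lemma image_boundedD: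
  assumes "image_bounded M g c" "h \<in> borel_measurable M"
  shows "(\<integral>\<^sup>+x. h (g x) \<partial>M) \<le> c * (\<integral>\<^sup>+x. h x \<partial>M)"
  using assms by (simp add: image_bounded_def)

lemma image_bounded_measurable: "image_bounded M g c \<Longrightarrow> g \<in> measurable M M"
  by (simp add: image_bounded_def)

lemma image_bounded_mono: "image_bounded M g c \<Longrightarrow> c \<le> c' \<Longrightarrow> image_bounded M g c'"
  unfolding image_bounded_def by (meson mult_right_mono order_trans zero_le)

lemma image_bounded_id: "image_bounded M (\<lambda>x. x) 1"
  by (simp add: image_bounded_def)

lemma image_bounded_cong:
  assumes "image_bounded M g c" "\<And>x. x \<in> space M \<Longrightarrow> g x = g' x"
  shows "image_bounded M g' c"
proof (rule image_boundedI)
  show "g' \<in> measurable M M"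
    using measurable_cong assms image_bounded_measurable by blast
  fix h :: "_ \<Rightarrow> ennreal" assume "h \<in> borel_measurable M"
  then have "(\<integral>\<^sup>+x. h (g x) \<partial>M) \<le> c * (\<integral>\<^sup>+x. h x \<partial>M)" by (rule image_boundedD[OF assms(1)])
  moreover have "(\<integral>\<^sup>+x. h (g x) \<partial>M) = (\<integral>\<^sup>+x. h (g' x) \<partial>M)"
    using assms(2) by (intro nn_integral_cong) simp
  ultimately show "(\<integral>\<^sup>+x. h (g' x) \<partial>M) \<le> c * (\<integral>\<^sup>+x. h x \<partial>M)" by simp
qed

lemma image_bounded_distr:
  assumes g: "image_bounded M g c" and f: "f \<in> measurable M N" and g': "g' \<in> measurable N N"
    and comm: "\<And>x. x \<in> space M \<Longrightarrow> f (g x) = g' (f x)"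
  shows "image_bounded (distr M N f) g' c"
proof (rule image_boundedI)
  show "g' \<in> measurable (distr M N f) (distr M N f)" using g' by simp
  fix h :: "_ \<Rightarrow> ennreal" assume "h \<in> borel_measurable (distr M N f)"
  then have h: "h \<in> borel_measurable N" by simp
  have "(\<integral>\<^sup>+y. h (g' y) \<partial>distr M N f) = (\<integral>\<^sup>+x. h (f (g x)) \<partial>M)"
    using f g' h by (simp add: nn_integral_distr comm cong: nn_integral_cong)
  also have "\<dots> \<le> c * (\<integral>\<^sup>+x. h (f x) \<partial>M)"
    using image_boundedD[OF g, of "\<lambda>x. h (f x)"] f h by simp
  also have "\<dots> = c * (\<integral>\<^sup>+y. h y \<partial>distr M N f)"
    using f h by (simp add: nn_integral_distr)
  finally show "(\<integral>\<^sup>+y. h (g' y) \<partial>distr M N f) \<le> c * (\<integral>\<^sup>+y. h y \<partial>distr M N f)" .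
qed

lemma emeasure_distr_le_if_image_bounded:
  assumes \<Phi>: "image_bounded M \<Phi> c" and f: "f \<in> measurable M N"
    and f': "\<And>x. x \<in> space M \<Longrightarrow> f' x = f (\<Phi> x)" and Y: "Y \<in> sets N"
  shows "emeasure (distr M N f') Y \<le> c * emeasure (distr M N f) Y"
proof -
  have f'_meas: "f' \<in> measurable M N"
    using measurable_comp[OF image_bounded_measurable[OF \<Phi>] f] f' measurable_cong
    by (metis comp_apply)
  have emeasure_distr_nn_integral: "emeasure (distr M N g) Y = (\<integral>\<^sup>+x. indicator Y (g x) \<partial>M)"
    if "g \<in> measurable M N" for g
    using that Y
    by (simp add: nn_integral_indicator[symmetric] nn_integral_distr del: nn_integral_indicator)
  have "emeasure (distr M N f') Y = (\<integral>\<^sup>+x. indicator Y (f (\<Phi> x)) \<partial>M)"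
    unfolding emeasure_distr_nn_integral[OF f'_meas] by (intro nn_integral_cong) (simp add: f')
  also have "\<dots> \<le> c * (\<integral>\<^sup>+x. indicator Y (f x) \<partial>M)"
    by (rule image_boundedD[OF \<Phi>]) (use f Y in measurable)
  also have "\<dots> = c * emeasure (distr M N f) Y"
    by (simp add: emeasure_distr_nn_integral[OF f])
  finally show ?thesis .
qed

lemma image_bounded_pair:
  assumes "sigma_finite_measure M2"
    and g1: "image_bounded M1 g1 c1" and g2: "image_bounded M2 g2 c2"
  shows "image_bounded (M1 \<Otimes>\<^sub>M M2) (map_prod g1 g2) (c1 * c2)"
proof (rule image_boundedI)
  interpret M2: sigma_finite_measure M2 by fact
  note [measurable] = image_bounded_measurable[OF g1] image_bounded_measurable[OF g2]
  show "map_prod g1 g2 \<in> measurable (M1 \<Otimes>\<^sub>M M2) (M1 \<Otimes>\<^sub>M M2)"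
    by (simp add: map_prod_def split_beta')
  fix h :: "_ \<Rightarrow> ennreal" assume h[measurable]: "h \<in> borel_measurable (M1 \<Otimes>\<^sub>M M2)"
  have "(\<integral>\<^sup>+z. h (map_prod g1 g2 z) \<partial>(M1 \<Otimes>\<^sub>M M2)) = (\<integral>\<^sup>+x. \<integral>\<^sup>+y. h (g1 x, g2 y) \<partial>M2 \<partial>M1)"
    by (subst M2.nn_integral_fst[symmetric]) (auto simp: map_prod_def split_beta')
  also have "\<dots> \<le> (\<integral>\<^sup>+x. c2 * \<integral>\<^sup>+y. h (g1 x, y) \<partial>M2 \<partial>M1)"
    by (intro nn_integral_mono image_boundedD[OF g2])
      (use measurable_space[OF image_bounded_measurable[OF g1]] in measurable)
  also have "\<dots> = c2 * (\<integral>\<^sup>+x. \<integral>\<^sup>+y. h (g1 x, y) \<partial>M2 \<partial>M1)"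
    by (rule nn_integral_cmult) measurable
  also have "\<dots> \<le> c2 * (c1 * (\<integral>\<^sup>+x. \<integral>\<^sup>+y. h (x, y) \<partial>M2 \<partial>M1))"
    by (intro mult_left_mono image_boundedD[OF g1, of "\<lambda>x. \<integral>\<^sup>+y. h (x, y) \<partial>M2"]) measurable
  also have "\<dots> = c1 * c2 * (\<integral>\<^sup>+z. h z \<partial>(M1 \<Otimes>\<^sub>M M2))"
    by (simp add: M2.nn_integral_fst mult_ac)
  finally show "(\<integral>\<^sup>+z. h (map_prod g1 g2 z) \<partial>(M1 \<Otimes>\<^sub>M M2)) \<le> c1 * c2 * (\<integral>\<^sup>+z. h z \<partial>(M1 \<Otimes>\<^sub>M M2))" .
qed

lemma image_bounded_PiM_insert:
  assumes sf: "\<And>i. sigma_finite_measure (M i)" and I: "finite I" "i \<notin> I"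
    and G: "image_bounded (PiM I M) G c"
    and g: "\<And>x. x \<in> space (PiM I M) \<Longrightarrow> image_bounded (M i) (g x) c'"
    and meas: "(\<lambda>x. (G (restrict x I))(i := g (restrict x I) (x i)))
                 \<in> measurable (PiM (insert i I) M) (PiM (insert i I) M)"
  shows "image_bounded (PiM (insert i I) M)
           (\<lambda>x. (G (restrict x I))(i := g (restrict x I) (x i))) (c * c')"
proof (rule image_boundedI[OF meas])
  interpret product_sigma_finite M using sf by (simp add: product_sigma_finite_def)
  let ?\<Psi> = "\<lambda>x. (G (restrict x I))(i := g (restrict x I) (x i))"
  note G_meas = image_bounded_measurable[OF G]
  fix h :: "_ \<Rightarrow> ennreal" assume h: "h \<in> borel_measurable (PiM (insert i I) M)"
  define F where "F z = (\<integral>\<^sup>+y. h (z(i := y)) \<partial>M i)" for z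
  have F: "F \<in> borel_measurable (PiM I M)"
    unfolding F_def using h by measurable
  have h_upd: "(\<lambda>y. h (z(i := y))) \<in> borel_measurable (M i)" if "z \<in> space (PiM I M)" for z
    using measurable_comp[OF measurable_component_update[OF that I(2)] h] by (simp add: comp_def)
  have "(\<integral>\<^sup>+x. h (?\<Psi> x) \<partial>PiM (insert i I) M) = (\<integral>\<^sup>+x. \<integral>\<^sup>+y. h (?\<Psi> (x(i := y))) \<partial>M i \<partial>PiM I M)"
    using I measurable_comp[OF meas h] by (simp add: product_nn_integral_insert comp_def)
  also have "\<dots> = (\<integral>\<^sup>+x. \<integral>\<^sup>+y. h ((G x)(i := g x y)) \<partial>M i \<partial>PiM I M)"
  proof (intro nn_integral_cong)
    fix x y assume "x \<in> space (PiM I M)"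
    then have "restrict (x(i := y)) I = x"
      using I(2) by (auto simp: space_PiM PiE_def extensional_def fun_eq_iff)
    then show "h (?\<Psi> (x(i := y))) = h ((G x)(i := g x y))" by simp
  qed
  also have "\<dots> \<le> (\<integral>\<^sup>+x. c' * F (G x) \<partial>PiM I M)"
    unfolding F_def
    by (intro nn_integral_mono image_boundedD[OF g] h_upd measurable_space[OF G_meas])
  also have "\<dots> = c' * (\<integral>\<^sup>+x. F (G x) \<partial>PiM I M)"
    using measurable_comp[OF G_meas F] by (simp add: nn_integral_cmult comp_def)
  also have "\<dots> \<le> c' * (c * (\<integral>\<^sup>+z. F z \<partial>PiM I M))"
    by (intro mult_left_mono image_boundedD[OF G F]) simp
  also have "\<dots> = c * c' * (\<integral>\<^sup>+x. h x \<partial>PiM (insert i I) M)"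
    using I h by (simp add: product_nn_integral_insert F_def mult_ac)
  finally show "(\<integral>\<^sup>+x. h (?\<Psi> x) \<partial>PiM (insert i I) M) \<le> c * c' * (\<integral>\<^sup>+x. h x \<partial>PiM (insert i I) M)" .
qed

lemma image_bounded_PiM:
  assumes finite: "finite I" and sf: "\<And>i. sigma_finite_measure (M i)"
    and g: "\<And>i. i \<in> I \<Longrightarrow> image_bounded (M i) (g i) (c i)"
  shows "image_bounded (PiM I M) (\<lambda>x. \<lambda>i\<in>I. g i (x i)) (\<Prod>i\<in>I. c i)"
  using finite g
proof (induction I rule: finite_induct)
  case empty
  show ?case
    unfolding prod.empty by (rule image_bounded_cong[OF image_bounded_id]) (simp add: space_PiM)
next
  case (insert i I)
  have meas: "(\<lambda>x. \<lambda>j\<in>insert i I. g j (x j)) \<in> measurable (PiM (insert i I) M) (PiM (insert i I) M)"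
    using insert.prems by (intro measurable_restrict measurable_comp[OF measurable_component_singleton
          image_bounded_measurable, simplified comp_def]) auto
  have eq: "(\<lambda>x. ((\<lambda>x. \<lambda>j\<in>I. g j (x j)) (restrict x I))(i := g i (x i)))
      = (\<lambda>x. \<lambda>j\<in>insert i I. g j (x j))"
    using insert.hyps by (auto simp: fun_eq_iff)
  have "image_bounded (PiM (insert i I) M) (\<lambda>x. \<lambda>j\<in>insert i I. g j (x j)) ((\<Prod>j\<in>I. c j) * c i)"
    using image_bounded_PiM_insert[OF sf insert.hyps insert.IH, of "\<lambda>_. g i" "c i"]
      insert.prems meas
    unfolding eq by simp
  then show ?case
    using insert.hyps by (metis mult.commute prod.insert)
qed

lemma image_bounded_adaptive:
  fixes J :: "nat \<Rightarrow> (nat \<Rightarrow> 'a) \<Rightarrow> 'j"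
  assumes sf: "sigma_finite_measure N" and g: "\<And>j. image_bounded N (g j) c"
    and causal: "\<And>t ns ns'. (\<And>s. s < t \<Longrightarrow> ns s = ns' s) \<Longrightarrow> J t ns = J t ns'"
    and meas: "\<And>T. (\<lambda>ns. \<lambda>t\<in>{..<T}. g (J t ns) (ns t))
                  \<in> measurable (PiM {..<T} (\<lambda>_. N)) (PiM {..<T} (\<lambda>_. N))"
  shows "image_bounded (PiM {..<T} (\<lambda>_. N)) (\<lambda>ns. \<lambda>t\<in>{..<T}. g (J t ns) (ns t)) (c ^ T)"
proof (induction T)
  case 0
  show ?case
    unfolding power_0 by (rule image_bounded_cong[OF image_bounded_id]) (simp add: space_PiM)
next
  case (Suc T)
  let ?\<Phi> = "\<lambda>T ns. \<lambda>t\<in>{..<T}. g (J t ns) (ns t)"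
  have eq: "(?\<Phi> T (restrict ns {..<T}))(T := g (J T (restrict ns {..<T})) (ns T)) = ?\<Phi> (Suc T) ns"
    for ns
  proof -
    have "J t (restrict ns {..<T}) = J t ns" if "t \<le> T" for t
      using that by (intro causal) auto
    then show ?thesis by (auto simp: fun_eq_iff)
  qed
  have "image_bounded (PiM (insert T {..<T}) (\<lambda>_. N)) (?\<Phi> (Suc T)) (c ^ T * c)"
    using image_bounded_PiM_insert[OF sf _ _ Suc.IH, where i=T and g="\<lambda>x. g (J T x)" and c'=c]
      g meas[of "Suc T"]
    unfolding eq lessThan_Suc by simp
  then show ?case
    by (simp only: lessThan_Suc power_Suc mult.commute[of c])
qed

section \<open>Laplace noise\<close>

lemma sets_lap [simp, measurable_cong]: "sets (lap b) = sets borel"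
  by (simp add: lap_def)

lemma measurable_lap_target [simp]: "measurable M (lap b) = measurable M borel"
  by (rule measurable_cong_sets) simp_all

lemma borel_measurable_lap_pdf [measurable]: "lap_pdf b \<in> borel_measurable borel"
  unfolding lap_pdf_def by measurable

lemma prob_space_lap:
  assumes b: "b > 0"
  shows "prob_space (lap b)"
proof
  let ?e = "exponential_density (1 / b)"
  have two_sided:
    "AE t in lborel. ennreal (lap_pdf b t) = ennreal (?e t) / 2 + ennreal (?e (- t)) / 2"
    using AE_lborel_singleton[of 0]
    by eventually_elim
      (use b in \<open>auto simp: exponential_density_def lap_pdf_def
        ennreal_divide_numeral divide_ennreal\<close>)
  have half: "(1::ennreal) / 2 + 1 / 2 = 1"
    by (simp flip: add_divide_distrib_ennreal add: divide_ennreal)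
  have e: "(\<integral>\<^sup>+t. ennreal (?e t) \<partial>lborel) = 1"
    using prob_space.emeasure_space_1[OF prob_space_exponential_density[of "1 / b"]] b
    by (simp add: emeasure_density)
  moreover have "(\<integral>\<^sup>+t. ennreal (?e (- t)) \<partial>lborel) = 1"
    using nn_integral_real_affine[of "\<lambda>t. ennreal (?e t)" "-1" 0] e by simp
  ultimately have "(\<integral>\<^sup>+t. ennreal (lap_pdf b t) \<partial>lborel) = 1"
    using half by (simp add: nn_integral_cong_AE[OF two_sided] nn_integral_add nn_integral_divide)
  then show "emeasure (lap b) (space (lap b)) = 1"
    by (simp add: lap_def emeasure_density)
qed

lemma image_bounded_lap_shift:
  assumes b: "b > 0"
  shows "image_bounded (lap b) (\<lambda>t. t + a) (exp (\<bar>a\<bar> / b))"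
proof (rule image_boundedI)
  show "(\<lambda>t. t + a) \<in> measurable (lap b) (lap b)" by simp
  fix h :: "real \<Rightarrow> ennreal" assume "h \<in> borel_measurable (lap b)"
  then have h [measurable]: "h \<in> borel_measurable borel" by simp
  have pdf_shift: "lap_pdf b (t - a) \<le> exp (\<bar>a\<bar> / b) * lap_pdf b t" for t
  proof -
    have "- \<bar>t - a\<bar> / b \<le> \<bar>a\<bar> / b + - \<bar>t\<bar> / b"
      using b by (simp add: divide_simps)
    then show ?thesis
      using b unfolding lap_pdf_def by (simp add: exp_add[symmetric] divide_simps)
  qed
  have "(\<integral>\<^sup>+t. h (t + a) \<partial>lap b) = (\<integral>\<^sup>+t. ennreal (lap_pdf b t) * h (t + a) \<partial>lborel)"
    by (simp add: lap_def nn_integral_density)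
  also have "\<dots> = (\<integral>\<^sup>+t. ennreal (lap_pdf b (t - a)) * h t \<partial>lborel)"
    using nn_integral_real_affine[of "\<lambda>t. ennreal (lap_pdf b t) * h (t + a)" 1 "- a"] by simp
  also have "\<dots> \<le> (\<integral>\<^sup>+t. ennreal (exp (\<bar>a\<bar> / b)) * (ennreal (lap_pdf b t) * h t) \<partial>lborel)"
    using pdf_shift b
    by (intro nn_integral_mono)
      (simp add: mult.assoc[symmetric] ennreal_mult'[symmetric] lap_pdf_def mult_right_mono)
  also have "\<dots> = ennreal (exp (\<bar>a\<bar> / b)) * (\<integral>\<^sup>+t. h t \<partial>lap b)"
    by (simp add: lap_def nn_integral_density nn_integral_cmult)
  finally show "(\<integral>\<^sup>+t. h (t + a) \<partial>lap b) \<le> ennreal (exp (\<bar>a\<bar> / b)) * (\<integral>\<^sup>+t. h t \<partial>lap b)" .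
qed

lemma borel_measurable_vec_lambda:
  assumes "\<And>i. sets (M i) = sets borel"
  shows "(\<lambda>f. \<chi> i. f i) \<in> borel_measurable (PiM UNIV M :: ('d::finite \<Rightarrow> real) measure)"
proof (rule borel_measurable_euclidean_space[THEN iffD2], intro ballI)
  fix e :: "real^'d" assume "e \<in> Basis"
  then obtain j where e: "e = axis j 1" by (auto simp: Basis_vec_def)
  have "(\<lambda>f. f j) \<in> borel_measurable (PiM UNIV M)"
    using measurable_component_singleton[of j UNIV M] assms measurable_cong_sets by blast
  then show "(\<lambda>f. (\<chi> i. f i) \<bullet> e) \<in> borel_measurable (PiM UNIV M)"
    by (simp add: e inner_axis)
qed

lemma sets_lap_vec [simp, measurable_cong]: "sets (lap_vec b) = sets borel"
  by (simp add: lap_vec_def)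

lemma measurable_lap_vec_target [simp]: "measurable M (lap_vec b) = measurable M borel"
  by (rule measurable_cong_sets) simp_all

lemma prob_space_lap_vec: "b > 0 \<Longrightarrow> prob_space (lap_vec b)"
  unfolding lap_vec_def
  by (intro prob_space.prob_space_distr prob_space_PiM prob_space_lap borel_measurable_vec_lambda)
    auto

lemma l1norm_nonneg: "l1norm x \<ge> 0"
  by (simp add: l1norm_def sum_nonneg)

lemma l1norm_scaleR: "l1norm (r *\<^sub>R x) = \<bar>r\<bar> * l1norm x"
  by (simp add: l1norm_def abs_mult sum_distrib_left)

lemma image_bounded_lap_vec_shift:
  fixes u :: "real^'d"
  assumes b: "b > 0"
  shows "image_bounded (lap_vec b) (\<lambda>v. v + u) (exp (l1norm u / b))"
proof -
  have "image_bounded (PiM UNIV (\<lambda>_::'d. lap b)) (\<lambda>f. \<lambda>i\<in>UNIV. f i + u $ i)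
          (\<Prod>i\<in>UNIV. ennreal (exp (\<bar>u $ i\<bar> / b)))"
    by (intro image_bounded_PiM prob_space_imp_sigma_finite prob_space_lap image_bounded_lap_shift b)
      auto
  then have "image_bounded (lap_vec b) (\<lambda>v. v + u) (\<Prod>i\<in>UNIV. ennreal (exp (\<bar>u $ i\<bar> / b)))"
    unfolding lap_vec_def
    by (rule image_bounded_distr) (auto simp: borel_measurable_vec_lambda vec_eq_iff)
  moreover have "(\<Prod>i\<in>UNIV. ennreal (exp (\<bar>u $ i\<bar> / b))) = ennreal (exp (l1norm u / b))"
    by (simp add: prod_ennreal l1norm_def exp_sum sum_divide_distrib)
  ultimately show ?thesis by simp
qed

type_synonym 'd noise = "nat \<Rightarrow> real \<times> (real^'d)"

abbreviation cluster_noise :: "real \<Rightarrow> real \<Rightarrow> (real \<times> (real^'d::finite)) measure" where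
  "cluster_noise bc bs \<equiv> lap bc \<Otimes>\<^sub>M lap_vec bs"

abbreviation noise_space :: "nat \<Rightarrow> nat \<Rightarrow> real \<Rightarrow> real \<Rightarrow> (nat \<Rightarrow> ('d::finite) noise) measure" where
  "noise_space k T bc bs \<equiv> PiM {..<T} (\<lambda>_. iter_noise k bc bs)"

lemma prob_space_cluster_noise:
  assumes "bc > 0" "bs > 0"
  shows "prob_space (cluster_noise bc bs :: (real \<times> (real^'d::finite)) measure)"
proof -
  interpret lap: prob_space "lap bc"
    using assms(1) by (rule prob_space_lap)
  interpret lap_vec: prob_space "lap_vec bs :: (real^'d) measure"
    using assms(2) by (rule prob_space_lap_vec)
  interpret pair_prob_space "lap bc" "lap_vec bs :: (real^'d) measure" ..
  show ?thesis by (rule prob_space_axioms)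
qed

lemma prob_space_iter_noise:
  "bc > 0 \<Longrightarrow> bs > 0 \<Longrightarrow> prob_space (iter_noise k bc bs :: ('d::finite) noise measure)"
  unfolding iter_noise_def by (intro prob_space_PiM prob_space_cluster_noise)

definition shift_noise :: "nat \<Rightarrow> nat \<Rightarrow> real \<Rightarrow> real^'d \<Rightarrow> 'd noise \<Rightarrow> 'd noise" where
  "shift_noise k j a v y = (\<lambda>i\<in>{..<k}. if i = j then (fst (y i) + a, snd (y i) + v) else y i)"

lemma image_bounded_shift_noise:
  fixes v :: "real^'d"
  assumes bc: "bc > 0" and bs: "bs > 0"
  shows "image_bounded (iter_noise k bc bs) (shift_noise k j a v) (exp (\<bar>a\<bar> / bc + l1norm v / bs))"
proof -
  let ?shift = "map_prod (\<lambda>t. t + a) (\<lambda>u. u + v)"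
  let ?e = "ennreal (exp (\<bar>a\<bar> / bc)) * ennreal (exp (l1norm v / bs))"
  have "image_bounded (cluster_noise bc bs) ?shift ?e"
    by (intro image_bounded_pair prob_space_imp_sigma_finite prob_space_lap_vec
        image_bounded_lap_shift image_bounded_lap_vec_shift bc bs)
  then have "image_bounded (PiM {..<k} (\<lambda>_. cluster_noise bc bs))
          (\<lambda>y. \<lambda>i\<in>{..<k}. (if i = j then ?shift else (\<lambda>z. z)) (y i))
          (\<Prod>i\<in>{..<k}. if i = j then ?e else 1)"
    using image_bounded_id
    by (intro image_bounded_PiM prob_space_imp_sigma_finite prob_space_cluster_noise bc bs) auto
  moreover have "(\<Prod>i\<in>{..<k}. if i = j then ?e else 1) \<le> ennreal (exp (\<bar>a\<bar> / bc + l1norm v / bs))"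
    using bc bs l1norm_nonneg[of v]
    by (simp add: ennreal_mult'[symmetric] flip: exp_add)
  ultimately show ?thesis
    unfolding iter_noise_def shift_noise_def
    by (rule image_bounded_cong[OF image_bounded_mono])
      (auto simp: fun_eq_iff map_prod_def split_beta')
qed

section \<open>Coupling the noise of runs on neighbouring data sets\<close>

lemma cluster_weight_add_mset [simp]:
  "cluster_weight k (add_mset (w, x) S) c j =
     cluster_weight k S c j + (if assign k c x = j then w else 0)"
  by (simp add: cluster_weight_def)

lemma cluster_sum_add_mset [simp]:
  "cluster_sum k (add_mset (w, x) S) c j =
     cluster_sum k S c j + (if assign k c x = j then w *\<^sub>R x else 0)"
  by (simp add: cluster_sum_def)

definition cluster_stats_shifted :: "nat \<Rightarrow> real^'d \<Rightarrow> real \<Rightarrow> real^'d \<Rightarrow> 'd wdata \<Rightarrow> 'd wdata \<Rightarrow> bool"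
  where "cluster_stats_shifted k x a v S S' \<longleftrightarrow> (\<forall>c j.
     cluster_weight k S' c j = cluster_weight k S c j + (if assign k c x = j then a else 0) \<and>
     cluster_sum k S' c j = cluster_sum k S c j + (if assign k c x = j then v else 0))"

lemma cluster_stats_shifted_add_mset: "cluster_stats_shifted k x w (w *\<^sub>R x) S (add_mset (w, x) S)"
  by (simp add: cluster_stats_shifted_def)

lemma cluster_stats_shifted_remove_mset:
  "cluster_stats_shifted k x (- w) ((- w) *\<^sub>R x) (add_mset (w, x) S) S"
  by (simp add: cluster_stats_shifted_def)

lemma measurable_assign [measurable]:
  assumes [measurable]: "\<And>j. (\<lambda>\<omega>. c \<omega> j) \<in> borel_measurable M"
  shows "(\<lambda>\<omega>. assign k (c \<omega>) x) \<in> measurable M (count_space UNIV)"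
  unfolding assign_def by measurable

lemma borel_measurable_cluster_weight [measurable]:
  assumes [measurable]: "\<And>j. (\<lambda>\<omega>. c \<omega> j) \<in> borel_measurable M"
  shows "(\<lambda>\<omega>. cluster_weight k S (c \<omega>) j) \<in> borel_measurable M"
proof (induction S)
  case (add p S)
  then show ?case by (cases p) simp
qed (simp add: cluster_weight_def)

lemma borel_measurable_cluster_sum [measurable]:
  assumes [measurable]: "\<And>j. (\<lambda>\<omega>. c \<omega> j) \<in> borel_measurable M"
  shows "(\<lambda>\<omega>. cluster_sum k S (c \<omega>) j) \<in> borel_measurable M"
proof (induction S)
  case (add p S)
  then show ?case by (cases p) simp
qed (simp add: cluster_sum_def)

lemma lloyd_run_causal:
  "(\<And>s. s < t \<Longrightarrow> ns s = ns' s) \<Longrightarrow> lloyd_run k S c0 t ns = lloyd_run k S c0 t ns'"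
  by (induction t) auto

lemma borel_measurable_noise_component:
  fixes bc bs :: real
  assumes "i \<in> I"
  defines "N \<equiv> PiM I (\<lambda>_. cluster_noise bc bs :: (real \<times> (real^'d::finite)) measure)"
  shows "(\<lambda>y. fst (y i)) \<in> borel_measurable N" and "(\<lambda>y. snd (y i)) \<in> borel_measurable N"
  unfolding N_def
  using measurable_component_singleton[OF assms(1), of "\<lambda>_. cluster_noise bc bs :: (real \<times> (real^'d)) measure"]
  by (simp_all add: measurable_pair_iff comp_def)

lemma measurable_shift_noise:
  "shift_noise k j a v
     \<in> measurable (iter_noise k bc bs) (iter_noise k bc bs :: ('d::finite) noise measure)"
  unfolding shift_noise_def iter_noise_def
proof (intro measurable_restrict)
  fix i assume "i \<in> {..<k}"
  note [measurable] = borel_measurable_noise_component[OF this, of bc bs, where 'd='d]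
  show "(\<lambda>y. if i = j then (fst (y i) + a, snd (y i) + v) else y i)
      \<in> measurable (PiM {..<k} (\<lambda>_. cluster_noise bc bs)) (cluster_noise bc bs)"
    by (simp add: measurable_pair_iff comp_def if_distrib) measurable
qed

lemma borel_measurable_lloyd_run:
  "t \<le> T \<Longrightarrow> (\<lambda>ns. lloyd_run k S c0 t ns j) \<in> borel_measurable (noise_space k T bc bs)"
proof (induction t arbitrary: j)
  case (Suc t)
  then have [measurable]: "(\<lambda>ns. lloyd_run k S c0 t ns j) \<in> borel_measurable (noise_space k T bc bs)"
    for j by simp
  show ?case
  proof (cases "j < k")
    case True
    have "(\<lambda>ns. ns t) \<in> measurable (noise_space k T bc bs) (PiM {..<k} (\<lambda>_. cluster_noise bc bs))"
      using Suc.prems by (simp add: iter_noise_def)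
    from measurable_compose[OF this borel_measurable_noise_component(1)]
      measurable_compose[OF this borel_measurable_noise_component(2)]
    have [measurable]: "(\<lambda>ns. fst (ns t j)) \<in> borel_measurable (noise_space k T bc bs)"
      "(\<lambda>ns. snd (ns t j)) \<in> borel_measurable (noise_space k T bc bs)"
      using True by simp_all
    show ?thesis
      using True by (simp add: lloyd_step_def) measurable
  qed (simp add: lloyd_step_def)
qed simp

definition noise_coupling :: "nat \<Rightarrow> 'd wdata \<Rightarrow> (nat \<Rightarrow> real^'d) \<Rightarrow> real^'d \<Rightarrow> real \<Rightarrow> real^'d
    \<Rightarrow> nat \<Rightarrow> (nat \<Rightarrow> 'd noise) \<Rightarrow> (nat \<Rightarrow> 'd noise)" where
  "noise_coupling k S c0 x a v T ns =
     (\<lambda>t\<in>{..<T}. shift_noise k (assign k (lloyd_run k S c0 t ns) x) a v (ns t))"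

lemma measurable_noise_coupling:
  "noise_coupling k S c0 x a v T \<in> measurable (noise_space k T bc bs) (noise_space k T bc bs)"
  unfolding noise_coupling_def
proof (intro measurable_restrict)
  fix t assume t: "t \<in> {..<T}"
  have "(\<lambda>ns. shift_noise k j a v (ns t)) \<in> measurable (noise_space k T bc bs) (iter_noise k bc bs)"
    for j
    by (rule measurable_compose[OF measurable_component_singleton[OF t] measurable_shift_noise])
  moreover have [measurable]:
    "(\<lambda>ns. lloyd_run k S c0 t ns j) \<in> borel_measurable (noise_space k T bc bs)" for j
    using t by (intro borel_measurable_lloyd_run) simp
  then have "(\<lambda>ns. assign k (lloyd_run k S c0 t ns) x)
      \<in> measurable (noise_space k T bc bs) (count_space UNIV)"
    by measurable
  ultimately show "(\<lambda>ns. shift_noise k (assign k (lloyd_run k S c0 t ns) x) a v (ns t))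
      \<in> measurable (noise_space k T bc bs) (iter_noise k bc bs)"
    by (rule measurable_compose_countable)
qed

lemma lloyd_step_shift_noise:
  assumes "cluster_stats_shifted k x a v S S'"
  shows "lloyd_step k S c (shift_noise k (assign k c x) a v y) = lloyd_step k S' c y"
  using assms unfolding cluster_stats_shifted_def lloyd_step_def shift_noise_def
  by (auto simp: fun_eq_iff algebra_simps)

lemma lloyd_run_noise_coupling:
  assumes shifted: "cluster_stats_shifted k x a v S S'"
  shows "t \<le> T \<Longrightarrow> lloyd_run k S c0 t (noise_coupling k S' c0 x a v T ns) = lloyd_run k S' c0 t ns"
proof (induction t)
  case (Suc t)
  then have "noise_coupling k S' c0 x a v T ns t =
      shift_noise k (assign k (lloyd_run k S' c0 t ns) x) a v (ns t)"
    by (simp add: noise_coupling_def)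
  with Suc show ?case
    by (simp add: lloyd_step_shift_noise[OF shifted])
qed simp

lemma measurable_lloyd_output:
  "(\<lambda>ns. restrict (lloyd_run k S c0 T ns) {..<k})
     \<in> measurable (noise_space k T bc bs) (PiM {..<k} (\<lambda>_. borel))"
  by (intro measurable_restrict borel_measurable_lloyd_run) simp

lemma prob_space_dp_lloyd: "bc > 0 \<Longrightarrow> bs > 0 \<Longrightarrow> prob_space (dp_lloyd k T bc bs c0 S)"
  unfolding dp_lloyd_def
  by (intro prob_space.prob_space_distr prob_space_PiM prob_space_iter_noise
      measurable_lloyd_output)

lemma dp_lloyd_le_exp_mult:
  fixes x v :: "real^'d"
  assumes bc: "bc > 0" and bs: "bs > 0"
    and shifted: "cluster_stats_shifted k x a v S S'"
    and Y: "Y \<in> sets (PiM {..<k} (\<lambda>_. borel :: (real^'d) measure))"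
  shows "measure (dp_lloyd k T bc bs c0 S') Y
           \<le> exp (real T * (\<bar>a\<bar> / bc + l1norm v / bs)) * measure (dp_lloyd k T bc bs c0 S) Y"
proof -
  let ?e = "exp (\<bar>a\<bar> / bc + l1norm v / bs)"
  interpret P: prob_space "dp_lloyd k T bc bs c0 S" using bc bs by (rule prob_space_dp_lloyd)
  interpret P': prob_space "dp_lloyd k T bc bs c0 S'" using bc bs by (rule prob_space_dp_lloyd)
  have "image_bounded (noise_space k T bc bs) (noise_coupling k S' c0 x a v T) (ennreal ?e ^ T)"
    unfolding noise_coupling_def
  proof (rule image_bounded_adaptive[where J="\<lambda>t ns. assign k (lloyd_run k S' c0 t ns) x"])
    show "sigma_finite_measure (iter_noise k bc bs :: 'd noise measure)"
      by (intro prob_space_imp_sigma_finite prob_space_iter_noise bc bs)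
    show "image_bounded (iter_noise k bc bs) (shift_noise k j a v) ?e" for j
      by (rule image_bounded_shift_noise[OF bc bs])
    show "assign k (lloyd_run k S' c0 t ns) x = assign k (lloyd_run k S' c0 t ns') x"
      if "\<And>s. s < t \<Longrightarrow> ns s = ns' s" for t ns ns'
      using lloyd_run_causal[OF that] by simp
    show "(\<lambda>ns. \<lambda>t\<in>{..<T'}. shift_noise k (assign k (lloyd_run k S' c0 t ns) x) a v (ns t))
        \<in> measurable (noise_space k T' bc bs) (noise_space k T' bc bs)" for T'
      using measurable_noise_coupling by (simp add: noise_coupling_def[abs_def])
  qed
  then have "emeasure (dp_lloyd k T bc bs c0 S') Y
      \<le> ennreal ?e ^ T * emeasure (dp_lloyd k T bc bs c0 S) Y"
    unfolding dp_lloyd_def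
    by (rule emeasure_distr_le_if_image_bounded[OF _ measurable_lloyd_output _ Y])
      (simp add: lloyd_run_noise_coupling[OF shifted])
  also have "\<dots> =
      ennreal (exp (real T * (\<bar>a\<bar> / bc + l1norm v / bs)) * measure (dp_lloyd k T bc bs c0 S) Y)"
    by (simp add: P.emeasure_eq_measure ennreal_power exp_of_nat_mult ennreal_mult')
  finally show ?thesis
    by (simp add: P'.emeasure_eq_measure)
qed

lemma indist_dp_lloyd_add_mset:
  fixes x :: "real^'d"
  assumes bc: "bc > 0" and bs: "bs > 0"
  shows "indist (real T * \<bar>w\<bar> * (1 / bc + l1norm x / bs))
           (dp_lloyd k T bc bs c0 S) (dp_lloyd k T bc bs c0 (add_mset (w, x) S))"
  unfolding indist_def
proof (intro ballI conjI)
  let ?P = "dp_lloyd k T bc bs c0 S" and ?P' = "dp_lloyd k T bc bs c0 (add_mset (w, x) S)"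
  have eps: "real T * (\<bar>w'\<bar> / bc + l1norm (w' *\<^sub>R x) / bs) =
      real T * \<bar>w\<bar> * (1 / bc + l1norm x / bs)"
    if "\<bar>w'\<bar> = \<bar>w\<bar>" for w'
    using that by (simp add: l1norm_scaleR field_simps)
  fix Y assume "Y \<in> sets ?P"
  then have Y: "Y \<in> sets (PiM {..<k} (\<lambda>_. borel))"
    by (simp add: dp_lloyd_def)
  have "measure ?P Y \<le> exp (real T * (\<bar>- w\<bar> / bc + l1norm ((- w) *\<^sub>R x) / bs)) * measure ?P' Y"
    by (rule dp_lloyd_le_exp_mult[OF bc bs cluster_stats_shifted_remove_mset Y])
  then show "measure ?P Y \<le> exp (real T * \<bar>w\<bar> * (1 / bc + l1norm x / bs)) * measure ?P' Y"
    by (simp only: eps[OF abs_minus_cancel])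
  have "measure ?P' Y \<le> exp (real T * (\<bar>w\<bar> / bc + l1norm (w *\<^sub>R x) / bs)) * measure ?P Y"
    by (rule dp_lloyd_le_exp_mult[OF bc bs cluster_stats_shifted_add_mset Y])
  then show "measure ?P' Y \<le> exp (real T * \<bar>w\<bar> * (1 / bc + l1norm x / bs)) * measure ?P Y"
    by (simp only: eps[OF refl])
qed

theorem proposition5:
  fixes X :: "(real^'d) set" and k T :: nat and b_count b_sum :: real
    and c0 :: "nat \<Rightarrow> real^'d"
  assumes "b_count > 0" and "b_sum > 0"
  shows "weighted_profile X
           (\<lambda>w x. (1 / b_count + l1norm x / b_sum) * real T * w)
           (dp_lloyd k T b_count b_sum c0)"
  unfolding weighted_profile_def
proof (intro conjI allI impI)
  fix w :: real and x :: "real^'d" assume "1 \<le> w"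
  then show "0 \<le> (1 / b_count + l1norm x / b_sum) * real T * w"
    using assms l1norm_nonneg[of x] by simp
next
  fix S :: "'d wdata" and w :: real and x :: "real^'d" assume "1 \<le> w"
  then have "real T * \<bar>w\<bar> * (1 / b_count + l1norm x / b_sum) =
      (1 / b_count + l1norm x / b_sum) * real T * w"
    by simp
  with indist_dp_lloyd_add_mset[OF assms, of T w x k c0 S]
  show "indist ((1 / b_count + l1norm x / b_sum) * real T * w)
          (dp_lloyd k T b_count b_sum c0 S) (dp_lloyd k T b_count b_sum c0 (add_mset (w, x) S))"
    by simp
qed

end
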